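(* Let $\mathcal{G}=(\mathcal{V},\mathcal{E},\rho)$ be a rooted weighted directed graph with edge weights $w_{ij}$ and set of trees $\mathcal{D}$. Let $r:\mathcal{D}\to\mathbb{R}^R$ and $s:\mathcal{D}\to\mathbb{R}^S$ be additively decomposable, $r(d)=\sum_{(i\to j)\in d}r_{ij}$ and $s(d)=\sum_{(i\to j)\in d}s_{ij}$ with $r_{ij}\in\mathbb{R}^R$, $s_{ij}\in\mathbb{R}^S$, where the $r_{ij}$ do not depend on the edge weights $w$. Let $t:\mathcal{D}\to\mathbb{R}^{R\times S}$ be $t(d)=r(d)\,s(d)^\top$ and $\bar{t}=\sum_{d\in\mathcal{D}}w(d)\,t(d)$. Then, with $\bar{r}=\sum_{d\in\mathcal{D}}w(d)\,r(d)$ regarded as a function of the edge weights, $$\bar{t}=\sum_{(i\to j)\in\mathcal{E}}\frac{\partial\bar{r}}{\partial w_{ij}}\,w_{ij}\,s_{ij}^\top,$$ and also $$\bar{t}=\sum_{(i\to j)\in\mathcal{E}}\Big(\bar{w}_{ij}\,r_{ij}\,s_{ij}^\top+\sum_{(k\to l)\in\mathcal{E}}\bar{w}_{ij,kl}\,r_{ij}\,s_{kl}^\top\Big).$$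
   Context: A rooted weighted directed graph $\mathcal{G}=(\mathcal{V},\mathcal{E},\rho)$ has node set $\mathcal{V}=\{1,\dots,N\}\cup\{\rho\}$ with designated root $\rho$; $\mathcal{E}$ is a set of edges $(i\to j)$ between distinct nodes, at most one edge per ordered pair, each carrying a weight $w_{ij}\in\mathbb{R}$; the root has no incoming edges. A tree $d$ of $\mathcal{G}$ is a set of $N$ edges containing no cycle, such that every non-root node has exactly one incoming edge and $\rho$ has at least one outgoing edge. $\mathcal{D}$ denotes the set of all trees (assumed nonempty). The weight of a tree is $w(d)=\prod_{(i\to j)\in d}w_{ij}$. For an edge $(i\to j)$, $\bar{w}_{ij}=\sum_{d\in\mathcal{D}:(i\to j)\in d}w(d)$. For distinct edges $(i\to j)\neq(k\to l)$, $\bar{w}_{ij,kl}=\sum_{d\in\mathcal{D}:(i\to j)\in d,(k\to l)\in d}w(d)$, and by convention $\bar{w}_{ij,ij}=0$. *)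

theory Defs
  imports "HOL-Analysis.Analysis"
begin

definition is_tree :: "'v set \<Rightarrow> ('v \<times> 'v) set \<Rightarrow> 'v \<Rightarrow> ('v \<times> 'v) set \<Rightarrow> bool" where
  "is_tree V E \<rho> d \<longleftrightarrow>
     d \<subseteq> E \<and> card d = card V - 1 \<and> acyclic d \<and>
     (\<forall>j \<in> V - {\<rho>}. \<exists>!i. (i, j) \<in> d) \<and>
     (\<exists>j. (\<rho>, j) \<in> d)"

definition trees :: "'v set \<Rightarrow> ('v \<times> 'v) set \<Rightarrow> 'v \<Rightarrow> ('v \<times> 'v) set set" where
  "trees V E \<rho> = {d. is_tree V E \<rho> d}"

definition tree_weight :: "('v \<times> 'v \<Rightarrow> real) \<Rightarrow> ('v \<times> 'v) set \<Rightarrow> real" where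
  "tree_weight w d = (\<Prod>e\<in>d. w e)"

definition additive :: "('v \<times> 'v \<Rightarrow> 'a::comm_monoid_add) \<Rightarrow> ('v \<times> 'v) set \<Rightarrow> 'a" where
  "additive f d = (\<Sum>e\<in>d. f e)"

definition outer :: "real ^ 'R \<Rightarrow> real ^ 'S \<Rightarrow> real ^ 'S ^ 'R" where
  "outer x y = (\<chi> a b. x $ a * y $ b)"

definition wsum :: "'v set \<Rightarrow> ('v \<times> 'v) set \<Rightarrow> 'v \<Rightarrow> ('v \<times> 'v \<Rightarrow> real)
      \<Rightarrow> (('v \<times> 'v) set \<Rightarrow> 'a::real_vector) \<Rightarrow> 'a" where
  "wsum V E \<rho> w f = (\<Sum>d\<in>trees V E \<rho>. tree_weight w d *\<^sub>R f d)"

definition wbar1 :: "'v set \<Rightarrow> ('v \<times> 'v) set \<Rightarrow> 'v \<Rightarrow> ('v \<times> 'v \<Rightarrow> real) \<Rightarrow> 'v \<times> 'v \<Rightarrow> real" where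
  "wbar1 V E \<rho> w e = (\<Sum>d\<in>{d \<in> trees V E \<rho>. e \<in> d}. tree_weight w d)"

definition wbar2 :: "'v set \<Rightarrow> ('v \<times> 'v) set \<Rightarrow> 'v \<Rightarrow> ('v \<times> 'v \<Rightarrow> real)
      \<Rightarrow> 'v \<times> 'v \<Rightarrow> 'v \<times> 'v \<Rightarrow> real" where
  "wbar2 V E \<rho> w e f =
     (if e = f then 0 else (\<Sum>d\<in>{d \<in> trees V E \<rho>. e \<in> d \<and> f \<in> d}. tree_weight w d))"

end

theory Submission
  imports Defs
begin

(* A tree weight is multilinear in the edge weights, so
   w_e times the partial derivative of bar r in w_e is the part of bar r carried by the trees
   containing e; pairing it with s_e and summing over e rebuilds r(d) s(d)^T tree by tree.
   Likewise [e = f] bar w_e + bar w_ef is the total weight of the trees containing both e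
   and f, and the double sum over edge pairs expands r(d) s(d)^T over the edges of d. *)

lemma bilinear_outer: "bilinear outer"
  by (auto simp: bilinear_def outer_def vec_eq_iff algebra_simps intro!: linearI)

interpretation outer: bounded_bilinear outer
  using bilinear_outer by (simp add: bilinear_conv_bounded_bilinear)

lemma trees_subset: "d \<in> trees V E \<rho> \<Longrightarrow> d \<subseteq> E"
  by (simp add: trees_def is_tree_def)

lemma finite_trees: "finite E \<Longrightarrow> finite (trees V E \<rho>)"
  by (meson Pow_iff finite_Pow_iff finite_subset subsetI trees_subset)

lemma finite_tree: "finite E \<Longrightarrow> d \<in> trees V E \<rho> \<Longrightarrow> finite d"
  by (metis finite_subset trees_subset)

lemma tree_weight_fun_upd:
  assumes "finite d"
  shows "tree_weight (w(e := x)) d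
           = (if e \<in> d then x * tree_weight w (d - {e}) else tree_weight w d)"
proof -
  have "tree_weight (w(e := x)) (d - {e}) = tree_weight w (d - {e})"
    unfolding tree_weight_def by (rule prod.cong) auto
  moreover have "e \<notin> d \<Longrightarrow> tree_weight (w(e := x)) d = tree_weight w d"
    unfolding tree_weight_def by (rule prod.cong) auto
  ultimately show ?thesis
    using assms by (auto simp: tree_weight_def prod.remove[of d e])
qed

lemma sum_incident_swap:
  fixes g :: "'a \<Rightarrow> 'a set \<Rightarrow> 'b::comm_monoid_add"
  assumes "finite A" "finite D" "\<And>d. d \<in> D \<Longrightarrow> d \<subseteq> A"
  shows "(\<Sum>a\<in>A. \<Sum>d\<in>{d \<in> D. a \<in> d}. g a d) = (\<Sum>d\<in>D. \<Sum>a\<in>d. g a d)"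
proof -
  have "(\<Sum>a\<in>A. \<Sum>d\<in>{d \<in> D. a \<in> d}. g a d) = (\<Sum>d\<in>D. \<Sum>a\<in>{a \<in> A. a \<in> d}. g a d)"
    using assms(1,2) by (rule sum.swap_restrict)
  also have "\<dots> = (\<Sum>d\<in>D. \<Sum>a\<in>d. g a d)"
    using assms(3) by (intro sum.cong refl) (metis inf.absorb_iff2 Int_def)
  finally show ?thesis .
qed

lemma has_vector_derivative_wsum_fun_upd:
  assumes "finite E"
  shows "((\<lambda>x. wsum V E \<rho> (w(e := x)) f) has_vector_derivative
            (\<Sum>d\<in>{d \<in> trees V E \<rho>. e \<in> d}. tree_weight w (d - {e}) *\<^sub>R f d)) (at x)"
proof -
  let ?T = "trees V E \<rho>"
  have affine: "wsum V E \<rho> (w(e := x)) f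
          = (\<Sum>d\<in>{d \<in> ?T. e \<notin> d}. tree_weight w d *\<^sub>R f d)
            + x *\<^sub>R (\<Sum>d\<in>{d \<in> ?T. e \<in> d}. tree_weight w (d - {e}) *\<^sub>R f d)" for x
  proof -
    have "wsum V E \<rho> (w(e := x)) f
        = (\<Sum>d\<in>?T. if e \<in> d then x *\<^sub>R (tree_weight w (d - {e}) *\<^sub>R f d)
                    else tree_weight w d *\<^sub>R f d)"
      unfolding wsum_def
      using assms by (intro sum.cong) (auto simp: tree_weight_fun_upd finite_tree)
    also have "\<dots> = (\<Sum>d\<in>{d \<in> ?T. e \<notin> d}. tree_weight w d *\<^sub>R f d)
            + x *\<^sub>R (\<Sum>d\<in>{d \<in> ?T. e \<in> d}. tree_weight w (d - {e}) *\<^sub>R f d)"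
      unfolding sum.If_cases[OF finite_trees[OF assms]]
      by (simp add: scaleR_sum_right Int_def add.commute)
    finally show ?thesis .
  qed
  show ?thesis
    unfolding affine by (auto intro!: derivative_eq_intros)
qed

lemma weight_scaled_derivative_wsum:
  assumes "finite E"
  shows "w e *\<^sub>R vector_derivative (\<lambda>x. wsum V E \<rho> (w(e := x)) f) (at (w e))
           = (\<Sum>d\<in>{d \<in> trees V E \<rho>. e \<in> d}. tree_weight w d *\<^sub>R f d)"
proof -
  have "w e * tree_weight w (d - {e}) = tree_weight w d" if "d \<in> trees V E \<rho>" "e \<in> d" for d
    using finite_tree[OF assms that(1)] that(2) by (simp add: tree_weight_def prod.remove[of d e])
  then show ?thesis
    unfolding vector_derivative_at[OF has_vector_derivative_wsum_fun_upd[OF assms]]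
    by (simp add: scaleR_sum_right)
qed

lemma wbar_pair:
  "(if e = f then wbar1 V E \<rho> w e else 0) + wbar2 V E \<rho> w e f
     = (\<Sum>d\<in>{d \<in> trees V E \<rho>. e \<in> d \<and> f \<in> d}. tree_weight w d)"
  by (simp add: wbar1_def wbar2_def)

lemma wsum_outer_additive_eq_derivative_sum:
  assumes "finite E"
  shows "wsum V E \<rho> w (\<lambda>d. outer (additive r d) (additive s d))
           = (\<Sum>e\<in>E. outer (w e *\<^sub>R vector_derivative
                   (\<lambda>x. wsum V E \<rho> (w(e := x)) (additive r)) (at (w e))) (s e))"
proof -
  let ?T = "trees V E \<rho>"
  have "wsum V E \<rho> w (\<lambda>d. outer (additive r d) (additive s d))
      = (\<Sum>d\<in>?T. \<Sum>e\<in>d. tree_weight w d *\<^sub>R outer (additive r d) (s e))"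
    by (simp add: wsum_def additive_def[of s] outer.sum_right scaleR_sum_right)
  also have "\<dots> = (\<Sum>e\<in>E. \<Sum>d\<in>{d \<in> ?T. e \<in> d}. tree_weight w d *\<^sub>R outer (additive r d) (s e))"
    using assms finite_trees[OF assms] trees_subset by (rule sum_incident_swap[symmetric])
  also have "\<dots> = (\<Sum>e\<in>E. outer (w e *\<^sub>R vector_derivative
                   (\<lambda>x. wsum V E \<rho> (w(e := x)) (additive r)) (at (w e))) (s e))"
    by (simp add: weight_scaled_derivative_wsum[OF assms] outer.sum_left outer.scaleR_left)
  finally show ?thesis .
qed

lemma wsum_outer_additive_eq_wbar_sum:
  assumes "finite E"
  shows "wsum V E \<rho> w (\<lambda>d. outer (additive r d) (additive s d))
           = (\<Sum>e\<in>E. wbar1 V E \<rho> w e *\<^sub>R outer (r e) (s e)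
                 + (\<Sum>f\<in>E. wbar2 V E \<rho> w e f *\<^sub>R outer (r e) (s f)))"
proof -
  let ?T = "trees V E \<rho>"
  let ?g = "\<lambda>e f d. tree_weight w d *\<^sub>R outer (r e) (s f)"
  have incident_finite: "finite {d \<in> ?T. e \<in> d}" for e
    using finite_trees[OF assms] by simp
  have "wsum V E \<rho> w (\<lambda>d. outer (additive r d) (additive s d))
      = (\<Sum>d\<in>?T. \<Sum>e\<in>d. \<Sum>f\<in>d. ?g e f d)"
    by (simp add: wsum_def additive_def outer.sum_left outer.sum_right scaleR_sum_right)
      (rule sum.cong[OF refl], rule sum.swap)
  also have "\<dots> = (\<Sum>e\<in>E. \<Sum>d\<in>{d \<in> ?T. e \<in> d}. \<Sum>f\<in>d. ?g e f d)"
    using assms finite_trees[OF assms] trees_subset by (rule sum_incident_swap[symmetric])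
  also have "\<dots> = (\<Sum>e\<in>E. \<Sum>f\<in>E. \<Sum>d\<in>{d \<in> ?T. e \<in> d \<and> f \<in> d}. ?g e f d)"
  proof (rule sum.cong[OF refl])
    fix e
    have "d \<subseteq> E" if "d \<in> {d \<in> ?T. e \<in> d}" for d
      using that by (auto dest: trees_subset)
    from sum_incident_swap[OF assms incident_finite this, where g = "?g e"]
    show "(\<Sum>d\<in>{d \<in> ?T. e \<in> d}. \<Sum>f\<in>d. ?g e f d)
        = (\<Sum>f\<in>E. \<Sum>d\<in>{d \<in> ?T. e \<in> d \<and> f \<in> d}. ?g e f d)"
      by simp
  qed
  also have "\<dots> = (\<Sum>e\<in>E. wbar1 V E \<rho> w e *\<^sub>R outer (r e) (s e)
                 + (\<Sum>f\<in>E. wbar2 V E \<rho> w e f *\<^sub>R outer (r e) (s f)))"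
  proof (rule sum.cong[OF refl])
    fix e assume "e \<in> E"
    then have "wbar1 V E \<rho> w e *\<^sub>R outer (r e) (s e)
        = (\<Sum>f\<in>E. (if e = f then wbar1 V E \<rho> w e else 0) *\<^sub>R outer (r e) (s f))"
      using assms by (simp add: if_distrib[of "\<lambda>c. c *\<^sub>R _"] cong: if_cong)
    then have "wbar1 V E \<rho> w e *\<^sub>R outer (r e) (s e)
          + (\<Sum>f\<in>E. wbar2 V E \<rho> w e f *\<^sub>R outer (r e) (s f))
        = (\<Sum>f\<in>E. ((if e = f then wbar1 V E \<rho> w e else 0) + wbar2 V E \<rho> w e f)
                    *\<^sub>R outer (r e) (s f))"
      by (simp add: scaleR_add_left sum.distrib)
    then show "(\<Sum>f\<in>E. \<Sum>d\<in>{d \<in> ?T. e \<in> d \<and> f \<in> d}. ?g e f d)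
        = wbar1 V E \<rho> w e *\<^sub>R outer (r e) (s e)
          + (\<Sum>f\<in>E. wbar2 V E \<rho> w e f *\<^sub>R outer (r e) (s f))"
      by (simp only: wbar_pair scaleR_sum_left)
  qed
  finally show ?thesis .
qed

theorem proposition7:
  fixes V :: "'v set" and E :: "('v \<times> 'v) set" and \<rho> :: 'v
    and w :: "'v \<times> 'v \<Rightarrow> real"
    and r :: "'v \<times> 'v \<Rightarrow> real ^ 'R" and s :: "'v \<times> 'v \<Rightarrow> real ^ 'S"
  assumes "finite V" and "\<rho> \<in> V" and "E \<subseteq> V \<times> V"
    and "\<forall>(i, j) \<in> E. i \<noteq> j"
    and "\<forall>i. (i, \<rho>) \<notin> E"
    and "trees V E \<rho> \<noteq> {}"
  shows "wsum V E \<rho> w (\<lambda>d. outer (additive r d) (additive s d))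
           = (\<Sum>e\<in>E. outer (w e *\<^sub>R vector_derivative
                   (\<lambda>x. wsum V E \<rho> (w(e := x)) (additive r)) (at (w e))) (s e)) \<and>
         wsum V E \<rho> w (\<lambda>d. outer (additive r d) (additive s d))
           = (\<Sum>e\<in>E. wbar1 V E \<rho> w e *\<^sub>R outer (r e) (s e)
                 + (\<Sum>f\<in>E. wbar2 V E \<rho> w e f *\<^sub>R outer (r e) (s f)))"
proof -
  \<comment> \<open>Only finiteness of the edge set matters: both identities hold for any finite
    family of edge sets in place of the trees.\<close>
  have "finite E"
    using assms(1,3) by (metis finite_SigmaI finite_subset)
  then show ?thesis
    by (intro conjI wsum_outer_additive_eq_derivative_sum wsum_outer_additive_eq_wbar_sum)
qed

end
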